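(* In the setting below, define real numbers $\epsilon_t$ by $\epsilon_t=1$ for $t\le 0$ and, for $t\ge 1$, $$\epsilon_t=\kappa^t+\alpha\mu\sum_{j=0}^{t-1}\kappa^j\sum_{i=1}^{n-1}\epsilon_{t-1-j-i}.$$ Then for all $t\ge 1$, $\mathcal{E}(t)\le\epsilon_t\,\mathcal{E}(0)$.
   Context: Let $\mathcal{A}*\mathcal{X}=\mathcal{B}$ be a consistent tensor system with unique solution $\mathcal{X}^*$, $\mathcal{A}\in\mathbb{R}^{n_1\times n_2\times n}$, $\mathcal{B}\in\mathbb{R}^{n_1\times n_3\times n}$, $\alpha>0$. Frontal slices $A_k=\mathcal{A}(:,:,k)$; $\mathrm{unfold}$ stacks them vertically, $\mathrm{fold}$ is its inverse, $\mathrm{bcirc}(\mathcal{A})$ is the block-circulant matrix with $(p,q)$ block $A_{((p-q)\bmod n)+1}$, and $\mathcal{A}*\mathcal{X}=\mathrm{fold}(\mathrm{bcirc}(\mathcal{A})\mathrm{unfold}(\mathcal{X}))$. $\mathcal{I}$ is the identity tensor (first frontal slice the identity, others zero); $\mathcal{A}^T$ transposes each frontal slice and reverses the order of slices $2,\dots,n$; $\|\cdot\|_F$ is the Frobenius norm and $\|\mathcal{C}\|_{op}=\|\mathrm{bcirc}(\mathcal{C})\|_2$. $\tilde{\mathcal{A}}_k$ has $k$-th frontal slice $A_k$ and zeros elsewhere. $\kappa=\max_i\|\mathcal{I}-\alpha\tilde{\mathcal{A}}_i^T*\tilde{\mathcal{A}}_i\|_{op}$, $\mu=\max_{i\neq j}\|\tilde{\mathcal{A}}_i^T*\tilde{\mathcal{A}}_j\|_{op}$.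 Cyclic frontal slice descent: $\mathcal{X}(t)=0$ for $t\le 0$; $\mathcal{R}(t+1)=\mathcal{B}-\sum_{j=0}^{n-1}\tilde{\mathcal{A}}_{((t-j)\bmod n)+1}*\mathcal{X}(t-j)$, $\mathcal{X}(t+1)=\mathcal{X}(t)+\alpha\tilde{\mathcal{A}}_{(t\bmod n)+1}^T*\mathcal{R}(t+1)$ for $t\ge 0$. $\mathcal{E}(t)=\|\mathcal{X}(t)-\mathcal{X}^*\|_F$, so $\mathcal{E}(t)=\|\mathcal{X}^*\|_F$ for $t\le 0$. *)

theory Defs
  imports Complex_Main
begin

text \<open>Third-order real tensors are represented as functions of three 0-based indices
  (row, column, frontal slice). Only entries in the index ranges given by the explicit
  dimensions are meaningful.\<close>

type_synonym tensor = "nat \<Rightarrow> nat \<Rightarrow> nat \<Rightarrow> real"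

text \<open>t-product A * X with n frontal slices and inner dimension m:
  fold(bcirc(A) unfold(X)); slice k of the result is sum over q of A_((k-q) mod n) X_q.\<close>
definition tprod :: "nat \<Rightarrow> nat \<Rightarrow> tensor \<Rightarrow> tensor \<Rightarrow> tensor" where
  "tprod n m A X = (\<lambda>i j k. \<Sum>q<n. \<Sum>l<m. A i l ((k + n - q) mod n) * X l j q)"

definition ttrans :: "nat \<Rightarrow> tensor \<Rightarrow> tensor" where
  "ttrans n A = (\<lambda>i j k. A j i ((n - k) mod n))"

definition tident :: tensor where
  "tident = (\<lambda>i j k. if k = 0 \<and> i = j then 1 else 0)"

definition tslice :: "tensor \<Rightarrow> nat \<Rightarrow> tensor" where
  "tslice A k = (\<lambda>i j q. if q = k then A i j q else 0)"

definition frob :: "nat \<Rightarrow> nat \<Rightarrow> nat \<Rightarrow> tensor \<Rightarrow> real" where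
  "frob a b n C = sqrt (\<Sum>i<a. \<Sum>j<b. \<Sum>k<n. (C i j k)\<^sup>2)"

text \<open>Block-circulant matrix of an a x b x n tensor, an (a n) x (b n) matrix whose
  (p,q) block is the frontal slice ((p-q) mod n).\<close>
definition bcirc :: "nat \<Rightarrow> nat \<Rightarrow> nat \<Rightarrow> tensor \<Rightarrow> nat \<Rightarrow> nat \<Rightarrow> real" where
  "bcirc a b n C = (\<lambda>r c. C (r mod a) (c mod b) ((r div a + n - c div b) mod n))"

definition mat_norm2 :: "nat \<Rightarrow> nat \<Rightarrow> (nat \<Rightarrow> nat \<Rightarrow> real) \<Rightarrow> real" where
  "mat_norm2 m k M = Sup {sqrt (\<Sum>r<m. (\<Sum>c<k. M r c * x c)\<^sup>2) | x.
        (\<Sum>c<k. (x c)\<^sup>2) \<le> 1}"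

definition top_norm :: "nat \<Rightarrow> nat \<Rightarrow> nat \<Rightarrow> tensor \<Rightarrow> real" where
  "top_norm a b n C = mat_norm2 (a * n) (b * n) (bcirc a b n C)"

end

theory Submission
  imports Defs "HOL-Analysis.Convex"
begin

text \<open>Let \<open>e(t) = X(t) - X*\<close> and let \<open>A\<^sub>k\<close> keep only slice \<open>k\<close> of \<open>A\<close>. As \<open>s\<close> runs over
  \<open>0..n-1\<close> the slices \<open>(t - s) mod n\<close> run over all slices, so consistency turns the residual into
  \<open>-\<Sum>\<^bsub>s<n\<^esub> A\<^bsub>t-s\<^esub> * e(t-s)\<close>. Splitting off \<open>s = 0\<close> gives, with \<open>i = t mod n\<close>,
    \<open>e(t+1) = (I - \<alpha> A\<^sub>i\<^sup>T * A\<^sub>i) * e(t) - \<alpha> \<Sum>\<^bsub>s=1..n-1\<^esub> A\<^sub>i\<^sup>T * A\<^bsub>t-s\<^esub> * e(t-s)\<close>,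
  where the slices \<open>t - s\<close> differ from \<open>i\<close>. Since \<open>\<parallel>C * Y\<parallel>\<^sub>F \<le> \<parallel>C\<parallel>\<^bsub>op\<^esub> \<parallel>Y\<parallel>\<^sub>F\<close>, this yields
  \<open>\<E>(t+1) \<le> \<kappa> \<E>(t) + \<alpha>\<mu> \<Sum>\<^bsub>s=1..n-1\<^esub> \<E>(t-s)\<close>. The closed form of \<open>\<epsilon>\<^sub>t\<close> satisfies the same
  recursion with equality, and the coefficients are nonnegative, so \<open>\<E>(t) \<le> \<epsilon>\<^sub>t \<E>(0)\<close> follows by
  induction on \<open>t\<close>.\<close>

section \<open>Frobenius and operator norms\<close>

lemma frob_eq_L2_set: "frob a b n C = L2_set (\<lambda>(i,j,k). C i j k) ({..<a} \<times> {..<b} \<times> {..<n})"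
  unfolding frob_def L2_set_def by (simp add: sum.cartesian_product case_prod_beta)

lemma frob_nonneg: "frob a b n C \<ge> 0"
  by (simp add: frob_def sum_nonneg)

lemma frob_cong:
  assumes "\<And>i j k. i < a \<Longrightarrow> j < b \<Longrightarrow> k < n \<Longrightarrow> C i j k = D i j k"
  shows "frob a b n C = frob a b n D"
  unfolding frob_def using assms by (intro arg_cong[where f=sqrt] sum.cong refl) auto

lemma frob_add_le: "frob a b n (\<lambda>i j k. C i j k + D i j k) \<le> frob a b n C + frob a b n D"
  unfolding frob_eq_L2_set
  using L2_set_triangle_ineq[of "\<lambda>(i,j,k). C i j k" "\<lambda>(i,j,k). D i j k" "{..<a} \<times> {..<b} \<times> {..<n}"]
  by (simp add: case_prod_unfold)

lemma frob_cmult: "frob a b n (\<lambda>i j k. c * C i j k) = \<bar>c\<bar> * frob a b n C"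
  unfolding frob_def by (simp add: power_mult_distrib real_sqrt_mult sum_distrib_left[symmetric])

lemma frob_diff_le: "frob a b n (\<lambda>i j k. C i j k - D i j k) \<le> frob a b n C + frob a b n D"
  using frob_add_le[of a b n C "\<lambda>i j k. - 1 * D i j k"] frob_cmult[of a b n "- 1" D] by simp

lemma frob_sum_le: "frob a b n (\<lambda>i j k. \<Sum>s\<in>S. F s i j k) \<le> (\<Sum>s\<in>S. frob a b n (F s))"
proof (induction S rule: infinite_finite_induct)
  case (insert x S)
  then show ?case
    using frob_add_le[of a b n "F x" "\<lambda>i j k. \<Sum>s\<in>S. F s i j k"] by simp
qed (simp_all add: frob_def)

lemma sum_lessThan_mult_div_mod:
  fixes f :: "nat \<Rightarrow> nat \<Rightarrow> 'a::comm_monoid_add"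
  shows "(\<Sum>c<b*n. f (c mod b) (c div b)) = (\<Sum>q<n. \<Sum>l<b. f l q)"
proof -
  have "c div b < n \<and> c mod b < b" if "c < b*n" for c
    using that by (auto simp: less_mult_imp_div_less mult.commute intro!: mod_less_divisor Nat.gr0I)
  moreover have "q*b + l < b*n" if "q < n" "l < b" for q l
  proof -
    have "q*b + l < Suc q * b" using that by simp
    also have "\<dots> \<le> n * b" using that by (intro mult_le_mono1) simp
    finally show ?thesis by (simp add: mult.commute)
  qed
  ultimately have "(\<Sum>c<b*n. f (c mod b) (c div b)) = (\<Sum>(q,l)\<in>{..<n}\<times>{..<b}. f l q)"
    by (intro sum.reindex_bij_witness[where i="\<lambda>(q,l). q*b + l" and j="\<lambda>c. (c div b, c mod b)"]) auto
  then show ?thesis by (simp add: sum.cartesian_product)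
qed

text \<open>Column \<open>j\<close> of \<open>unfold(Z)\<close> is the vector \<open>r \<mapsto> Z (r mod a) j (r div a)\<close>.\<close>

lemma frob_sq_unfold: "(frob a b n Z)\<^sup>2 = (\<Sum>j<b. \<Sum>r<a*n. (Z (r mod a) j (r div a))\<^sup>2)"
proof -
  have "(frob a b n Z)\<^sup>2 = (\<Sum>i<a. \<Sum>j<b. \<Sum>k<n. (Z i j k)\<^sup>2)"
    unfolding frob_def by (simp add: sum_nonneg)
  also have "\<dots> = (\<Sum>j<b. \<Sum>k<n. \<Sum>i<a. (Z i j k)\<^sup>2)"
    by (subst sum.swap) (simp add: sum.swap[of _ "{..<n}"])
  also have "\<dots> = (\<Sum>j<b. \<Sum>r<a*n. (Z (r mod a) j (r div a))\<^sup>2)"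
    by (intro sum.cong refl sum_lessThan_mult_div_mod[symmetric])
  finally show ?thesis .
qed

lemma bcirc_mult_unfold:
  "(\<Sum>c<b*n. bcirc a b n C r c * Y (c mod b) j (c div b)) = tprod n b C Y (r mod a) j (r div a)"
  unfolding bcirc_def tprod_def by (rule sum_lessThan_mult_div_mod)

lemma mat_norm2_upper:
  assumes "(\<Sum>c<k. (x c)\<^sup>2) \<le> 1"
  shows "sqrt (\<Sum>r<m. (\<Sum>c<k. M r c * x c)\<^sup>2) \<le> mat_norm2 m k M"
proof -
  have bounded: "sqrt (\<Sum>r<m. (\<Sum>c<k. M r c * y c)\<^sup>2) \<le> sqrt (\<Sum>r<m. \<Sum>c<k. (M r c)\<^sup>2)"
    if y: "(\<Sum>c<k. (y c)\<^sup>2) \<le> 1" for y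
  proof -
    have "(\<Sum>c<k. M r c * y c)\<^sup>2 \<le> (\<Sum>c<k. (M r c)\<^sup>2)" for r
    proof -
      have "(\<Sum>c<k. M r c * y c)\<^sup>2 \<le> (\<Sum>c<k. (M r c)\<^sup>2) * (\<Sum>c<k. (y c)\<^sup>2)"
        by (rule Cauchy_Schwarz_ineq_sum)
      also have "\<dots> \<le> (\<Sum>c<k. (M r c)\<^sup>2)"
        using y by (intro mult_left_le) (simp_all add: sum_nonneg)
      finally show ?thesis .
    qed
    then show ?thesis by (intro real_sqrt_le_mono sum_mono)
  qed
  let ?S = "{sqrt (\<Sum>r<m. (\<Sum>c<k. M r c * y c)\<^sup>2) | y. (\<Sum>c<k. (y c)\<^sup>2) \<le> 1}"
  have "bdd_above ?S"
    by (rule bdd_aboveI[where M="sqrt (\<Sum>r<m. \<Sum>c<k. (M r c)\<^sup>2)"]) (use bounded in blast)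
  then show ?thesis
    unfolding mat_norm2_def by (rule cSup_upper[rotated]) (use assms in blast)
qed

lemma mat_norm2_nonneg: "mat_norm2 m k M \<ge> 0"
  using mat_norm2_upper[where x="\<lambda>_. 0" and m=m and M=M] by simp

lemma mat_norm2_bound:
  "(\<Sum>r<m. (\<Sum>c<k. M r c * x c)\<^sup>2) \<le> (mat_norm2 m k M)\<^sup>2 * (\<Sum>c<k. (x c)\<^sup>2)"
proof (cases "(\<Sum>c<k. (x c)\<^sup>2) = 0")
  case True
  then have "\<forall>c<k. x c = 0" by (simp add: sum_nonneg_eq_0_iff)
  then show ?thesis by (simp add: True)
next
  case False
  define s where "s = (\<Sum>c<k. (x c)\<^sup>2)"
  have "s > 0" using False sum_nonneg[of "{..<k}" "\<lambda>c. (x c)\<^sup>2"] unfolding s_def by auto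
  have "(\<Sum>c<k. (x c / sqrt s)\<^sup>2) = 1"
    using \<open>s > 0\<close> by (simp add: power_divide sum_divide_distrib[symmetric] s_def[symmetric])
  then have "sqrt (\<Sum>r<m. (\<Sum>c<k. M r c * (x c / sqrt s))\<^sup>2) \<le> mat_norm2 m k M"
    by (intro mat_norm2_upper) simp
  moreover have "(\<Sum>r<m. (\<Sum>c<k. M r c * (x c / sqrt s))\<^sup>2) = (\<Sum>r<m. (\<Sum>c<k. M r c * x c)\<^sup>2) / s"
    using \<open>s > 0\<close> by (simp add: sum_divide_distrib[symmetric] power_divide times_divide_eq_right)
  ultimately have "(\<Sum>r<m. (\<Sum>c<k. M r c * x c)\<^sup>2) / s \<le> (mat_norm2 m k M)\<^sup>2"
    using real_sqrt_le_iff sqrt_le_D by metis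
  then show ?thesis using \<open>s > 0\<close> by (simp add: s_def[symmetric] pos_divide_le_eq)
qed

lemma top_norm_nonneg: "top_norm a b n C \<ge> 0"
  unfolding top_norm_def by (rule mat_norm2_nonneg)

lemma frob_tprod_le: "frob a d n (tprod n b C Y) \<le> top_norm a b n C * frob b d n Y"
proof -
  let ?L = "top_norm a b n C"
  have "(frob a d n (tprod n b C Y))\<^sup>2
      = (\<Sum>j<d. \<Sum>r<a*n. (\<Sum>c<b*n. bcirc a b n C r c * Y (c mod b) j (c div b))\<^sup>2)"
    by (simp add: frob_sq_unfold bcirc_mult_unfold)
  also have "\<dots> \<le> (\<Sum>j<d. ?L\<^sup>2 * (\<Sum>c<b*n. (Y (c mod b) j (c div b))\<^sup>2))"
    unfolding top_norm_def by (intro sum_mono mat_norm2_bound)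
  also have "\<dots> = (?L * frob b d n Y)\<^sup>2"
    by (simp add: frob_sq_unfold power_mult_distrib sum_distrib_left)
  finally show ?thesis
    by (rule power2_le_imp_le) (simp add: top_norm_nonneg frob_nonneg)
qed

section \<open>Algebra of the t-product\<close>

lemma mod_diff_mod_diff_eq:
  fixes a b c n :: int
  shows "(a - b mod n - c) mod n = (a - b - c) mod n"
  by (metis diff_right_commute mod_diff_right_eq)

lemma nat_mod_add_diff:
  assumes "q \<le> n"
  shows "(k + n - q) mod n = nat ((int k - int q) mod int n)"
proof -
  have "int (k + n - q) = int k - int q + int n" using assms by simp
  then show ?thesis by (metis mod_add_self2 nat_int of_nat_mod)
qed

lemma sum_mod_reflect:
  fixes t :: int and F :: "nat \<Rightarrow> 'a::comm_monoid_add"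
  assumes "n > 0"
  shows "(\<Sum>s<n. F (nat ((t - int s) mod int n))) = (\<Sum>p<n. F p)"
  by (rule sum.reindex_bij_witness[where i="\<lambda>p. nat ((t - int p) mod int n)"
        and j="\<lambda>p. nat ((t - int p) mod int n)"])
     (use assms in \<open>auto simp: nat_less_iff mod_diff_right_eq\<close>)

lemma nat_mod_diff_neq:
  fixes t :: int
  assumes "0 < s" "s < n"
  shows "nat ((t - int s) mod int n) \<noteq> nat (t mod int n)"
proof
  assume "nat ((t - int s) mod int n) = nat (t mod int n)"
  then have "(t - int s) mod int n = t mod int n" using assms by (simp add: eq_nat_nat_iff)
  then have "int n dvd int s" by (simp add: mod_eq_dvd_iff)
  then show False using assms by (simp add: nat_dvd_not_less)
qed

lemma tprod_eq_int_index:
  "tprod n m A X i j k = (\<Sum>q<n. \<Sum>l<m. A i l (nat ((int k - int q) mod int n)) * X l j q)"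
  unfolding tprod_def by (intro sum.cong refl) (simp add: nat_mod_add_diff)

lemma tprod_diff_right:
  "tprod n m C (\<lambda>a b c. Y a b c - Z a b c) i j k = tprod n m C Y i j k - tprod n m C Z i j k"
  by (simp add: tprod_def sum_subtractf right_diff_distrib)

lemma tprod_uminus_right: "tprod n m C (\<lambda>a b c. - Y a b c) i j k = - tprod n m C Y i j k"
  by (simp add: tprod_def sum_negf)

lemma tprod_sum_right:
  "tprod n m C (\<lambda>a b c. \<Sum>s\<in>S. F s a b c) i j k = (\<Sum>s\<in>S. tprod n m C (F s) i j k)"
  unfolding tprod_def by (simp add: sum_distrib_left sum.swap[of _ S])

lemma tprod_diff_cmult_left:
  "tprod n m (\<lambda>a b c. C a b c - \<alpha> * D a b c) Y i j k = tprod n m C Y i j k - \<alpha> * tprod n m D Y i j k"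
  by (simp add: tprod_def sum_subtractf left_diff_distrib sum_distrib_left mult.assoc)

lemma tprod_cong_right:
  assumes "\<And>l q. l < m \<Longrightarrow> q < n \<Longrightarrow> Y l j q = Z l j q"
  shows "tprod n m C Y i j k = tprod n m C Z i j k"
  unfolding tprod_def using assms by (intro sum.cong refl) auto

lemma tprod_assoc:
  "tprod n b (tprod n m T S) Y i j k = tprod n m T (tprod n b S Y) i j k"
proof -
  let ?c = "\<lambda>z. nat (z mod int n)"
  have inner: "(\<Sum>p<n. \<Sum>u<m. T i u (?c (int k - int p)) * S u l (?c (int p - int q)))
             = (\<Sum>p<n. \<Sum>u<m. T i u (?c (int (?c (int k - int q)) - int p)) * S u l p)"
    if "q < n" for l q
  proof -
    have "n > 0" using that by simp
    define F where "F x = (\<Sum>u<m. T i u x * S u l (?c (int k - int x - int q)))" for x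
    have "(\<Sum>p<n. \<Sum>u<m. T i u (?c (int k - int p)) * S u l (?c (int p - int q)))
        = (\<Sum>p<n. F (?c (int k - int p)))"
      using \<open>n > 0\<close> by (intro sum.cong refl) (simp add: F_def mod_diff_left_eq mod_diff_mod_diff_eq)
    also have "\<dots> = (\<Sum>p<n. F (?c (int k - int q - int p)))"
      using \<open>n > 0\<close> by (simp add: sum_mod_reflect)
    also have "\<dots> = (\<Sum>p<n. \<Sum>u<m. T i u (?c (int (?c (int k - int q)) - int p)) * S u l p)"
      using \<open>n > 0\<close> by (intro sum.cong refl) (simp add: F_def mod_diff_left_eq mod_diff_mod_diff_eq)
    finally show ?thesis .
  qed
  have "tprod n m T (tprod n b S Y) i j k
      = (\<Sum>(p,u)\<in>{..<n}\<times>{..<m}. \<Sum>(q,l)\<in>{..<n}\<times>{..<b}.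
           T i u (?c (int k - int p)) * S u l (?c (int p - int q)) * Y l j q)"
    by (simp add: tprod_eq_int_index sum_distrib_left mult.assoc case_prod_unfold
        sum.cartesian_product[of _ "{..<m}" "{..<n}"] sum.cartesian_product[of _ "{..<b}" "{..<n}"])
  also have "\<dots> = (\<Sum>(q,l)\<in>{..<n}\<times>{..<b}. \<Sum>(p,u)\<in>{..<n}\<times>{..<m}.
           T i u (?c (int k - int p)) * S u l (?c (int p - int q)) * Y l j q)"
    unfolding case_prod_unfold by (rule sum.swap)
  also have "\<dots> = (\<Sum>q<n. \<Sum>l<b. (\<Sum>p<n. \<Sum>u<m.
           T i u (?c (int k - int p)) * S u l (?c (int p - int q))) * Y l j q)"
    by (simp add: sum_distrib_right case_prod_unfold
        sum.cartesian_product[of _ "{..<m}" "{..<n}"] sum.cartesian_product[of _ "{..<b}" "{..<n}"])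
  also have "\<dots> = tprod n b (tprod n m T S) Y i j k"
    by (simp add: tprod_eq_int_index inner sum_distrib_right)
  finally show ?thesis ..
qed

lemma tprod_tident_left:
  assumes "i < m" "k < n"
  shows "tprod n m tident Y i j k = Y i j k"
proof -
  have "nat ((int k - int q) mod int n) = 0 \<longleftrightarrow> q = k" if "q < n" for q
    using assms that
    by (smt (verit) mod_minus_eq mod_minus_minus mod_pos_pos_trivial nat_0_iff nat_int neg_mod_sign
        of_nat_less_0_iff of_nat_less_iff)
  then have "tprod n m tident Y i j k = (\<Sum>q<n. \<Sum>l<m. if q = k \<and> i = l then Y l j k else 0)"
    by (simp add: tprod_eq_int_index tident_def if_distrib[of "\<lambda>x. x * _"] cong: if_cong)
  also have "\<dots> = Y i j k"
    using assms by (subst sum.swap) (simp flip: if_if_eq_conj)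
  finally show ?thesis .
qed

lemma sum_tprod_tslice:
  assumes "n > 0"
  shows "(\<Sum>p<n. tprod n m (tslice A p) Y i j k) = tprod n m A Y i j k"
proof -
  let ?c = "\<lambda>q. nat ((int k - int q) mod int n)"
  have "(\<Sum>p<n. tprod n m (tslice A p) Y i j k)
      = (\<Sum>q<n. \<Sum>l<m. \<Sum>p<n. tslice A p i l (?c q) * Y l j q)"
    unfolding tprod_eq_int_index by (subst sum.swap) (simp add: sum.swap[of _ "{..<n}" "{..<m}"])
  also have "\<dots> = (\<Sum>q<n. \<Sum>l<m. A i l (?c q) * Y l j q)"
    using assms by (intro sum.cong refl) (simp add: tslice_def if_distrib[of "\<lambda>x. x * _"] nat_less_iff cong: if_cong)
  finally show ?thesis by (simp add: tprod_eq_int_index)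
qed

section \<open>The error recursion\<close>

abbreviation slice_gram :: "nat \<Rightarrow> nat \<Rightarrow> tensor \<Rightarrow> nat \<Rightarrow> nat \<Rightarrow> tensor" where
  "slice_gram n n1 A i j \<equiv> tprod n n1 (ttrans n (tslice A i)) (tslice A j)"

lemma residual_eq_error_sum:
  fixes t :: int
  assumes "n > 0" and sol: "\<forall>i<n1. \<forall>j<n3. \<forall>k<n. tprod n n2 A Xstar i j k = B i j k"
    and "a < n1" "b < n3" "c < n"
  shows "B a b c - (\<Sum>s<n. tprod n n2 (tslice A (nat ((t - int s) mod int n))) (X (t - int s)) a b c)
    = - (\<Sum>s<n. tprod n n2 (tslice A (nat ((t - int s) mod int n)))
                  (\<lambda>i j k. X (t - int s) i j k - Xstar i j k) a b c)"
proof -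
  have "B a b c = (\<Sum>p<n. tprod n n2 (tslice A p) Xstar a b c)"
    using sol assms by (simp add: sum_tprod_tslice)
  also have "\<dots> = (\<Sum>s<n. tprod n n2 (tslice A (nat ((t - int s) mod int n))) Xstar a b c)"
    using assms(1) by (rule sum_mod_reflect[symmetric])
  finally show ?thesis by (simp add: tprod_diff_right sum_subtractf)
qed

lemma error_step_eq:
  fixes t :: int and X :: "int \<Rightarrow> tensor"
  assumes "n > 0" and sol: "\<forall>i<n1. \<forall>j<n3. \<forall>k<n. tprod n n2 A Xstar i j k = B i j k"
    and X_step: "X (t + 1) = (\<lambda>i j k. X t i j k + \<alpha> * tprod n n1 (ttrans n (tslice A (nat (t mod int n))))
            (\<lambda>a b c. B a b c - (\<Sum>s<n. tprod n n2 (tslice A (nat ((t - int s) mod int n)))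
                                          (X (t - int s)) a b c)) i j k)"
    and ijk: "i < n2" "j < n3" "k < n"
  shows "X (t + 1) i j k - Xstar i j k
    = tprod n n2 (\<lambda>a b c. tident a b c - \<alpha> * slice_gram n n1 A (nat (t mod int n)) (nat (t mod int n)) a b c)
        (\<lambda>i j k. X t i j k - Xstar i j k) i j k
      - \<alpha> * (\<Sum>s\<in>{1..n-1}. tprod n n2 (slice_gram n n1 A (nat (t mod int n)) (nat ((t - int s) mod int n)))
                   (\<lambda>i j k. X (t - int s) i j k - Xstar i j k) i j k)"
proof -
  define e where "e u = (\<lambda>i j k. X u i j k - Xstar i j k)" for u
  define G where "G s = slice_gram n n1 A (nat (t mod int n)) (nat ((t - int s) mod int n))" for s
  have "{..<n} = insert 0 {1..n-1}" using \<open>n > 0\<close> by auto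
  then have split: "(\<Sum>s<n. tprod n n2 (G s) (e (t - int s)) i j k)
      = tprod n n2 (G 0) (e t) i j k + (\<Sum>s\<in>{1..n-1}. tprod n n2 (G s) (e (t - int s)) i j k)"
    by simp
  have "X (t + 1) i j k - Xstar i j k = e t i j k + \<alpha> * tprod n n1 (ttrans n (tslice A (nat (t mod int n))))
      (\<lambda>a b c. B a b c - (\<Sum>s<n. tprod n n2 (tslice A (nat ((t - int s) mod int n))) (X (t - int s)) a b c)) i j k"
    by (simp add: X_step e_def)
  also have "tprod n n1 (ttrans n (tslice A (nat (t mod int n))))
      (\<lambda>a b c. B a b c - (\<Sum>s<n. tprod n n2 (tslice A (nat ((t - int s) mod int n))) (X (t - int s)) a b c)) i j k
    = tprod n n1 (ttrans n (tslice A (nat (t mod int n))))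
      (\<lambda>a b c. - (\<Sum>s<n. tprod n n2 (tslice A (nat ((t - int s) mod int n))) (e (t - int s)) a b c)) i j k"
    unfolding e_def using assms by (intro tprod_cong_right) (simp add: residual_eq_error_sum)
  also have "\<dots> = - (\<Sum>s<n. tprod n n2 (G s) (e (t - int s)) i j k)"
    by (simp add: G_def tprod_uminus_right tprod_sum_right tprod_assoc)
  finally show ?thesis
    using ijk split by (simp add: e_def G_def tprod_diff_cmult_left tprod_tident_left algebra_simps)
qed

lemma error_norm_recursion:
  fixes t :: int and X :: "int \<Rightarrow> tensor"
  assumes "n > 0" "\<alpha> > 0"
    and sol: "\<forall>i<n1. \<forall>j<n3. \<forall>k<n. tprod n n2 A Xstar i j k = B i j k"
    and kappa: "\<And>i. i < n \<Longrightarrow>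
          top_norm n2 n2 n (\<lambda>a b c. tident a b c - \<alpha> * slice_gram n n1 A i i a b c) \<le> \<kappa>"
    and mu: "\<And>i j. i < n \<Longrightarrow> j < n \<Longrightarrow> i \<noteq> j \<Longrightarrow> top_norm n2 n2 n (slice_gram n n1 A i j) \<le> \<mu>"
    and X_step: "X (t + 1) = (\<lambda>i j k. X t i j k + \<alpha> * tprod n n1 (ttrans n (tslice A (nat (t mod int n))))
            (\<lambda>a b c. B a b c - (\<Sum>s<n. tprod n n2 (tslice A (nat ((t - int s) mod int n)))
                                          (X (t - int s)) a b c)) i j k)"
  shows "frob n2 n3 n (\<lambda>i j k. X (t + 1) i j k - Xstar i j k)
    \<le> \<kappa> * frob n2 n3 n (\<lambda>i j k. X t i j k - Xstar i j k)
      + \<alpha> * \<mu> * (\<Sum>s\<in>{1..n-1}. frob n2 n3 n (\<lambda>i j k. X (t - int s) i j k - Xstar i j k))"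
proof -
  define e where "e u = (\<lambda>i j k. X u i j k - Xstar i j k)" for u
  define i0 where "i0 = nat (t mod int n)"
  define \<sigma> where "\<sigma> s = nat ((t - int s) mod int n)" for s
  define U where "U = (\<lambda>a b c. tident a b c - \<alpha> * slice_gram n n1 A i0 i0 a b c)"
  define D where "D = (\<lambda>i j k. \<Sum>s\<in>{1..n-1}. tprod n n2 (slice_gram n n1 A i0 (\<sigma> s)) (e (t - int s)) i j k)"
  have "i0 < n" "\<And>s. \<sigma> s < n" using \<open>n > 0\<close> by (simp_all add: i0_def \<sigma>_def nat_less_iff)
  have delayed: "frob n2 n3 n (tprod n n2 (slice_gram n n1 A i0 (\<sigma> s)) (e (t - int s)))
      \<le> \<mu> * frob n2 n3 n (e (t - int s))" if "s \<in> {1..n-1}" for s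
  proof -
    have "0 < s" "s < n" using that \<open>n > 0\<close> by auto
    then have "i0 \<noteq> \<sigma> s" using nat_mod_diff_neq[of s n t] by (auto simp: i0_def \<sigma>_def)
    then have "top_norm n2 n2 n (slice_gram n n1 A i0 (\<sigma> s)) \<le> \<mu>"
      using mu \<open>i0 < n\<close> \<open>\<sigma> s < n\<close> by blast
    then show ?thesis by (rule order_trans[OF frob_tprod_le mult_right_mono[OF _ frob_nonneg]])
  qed
  have "frob n2 n3 n (e (t + 1)) = frob n2 n3 n (\<lambda>i j k. tprod n n2 U (e t) i j k - \<alpha> * D i j k)"
    unfolding e_def U_def D_def i0_def \<sigma>_def
    by (rule frob_cong) (simp add: error_step_eq[OF \<open>n > 0\<close> sol X_step])
  also have "\<dots> \<le> frob n2 n3 n (tprod n n2 U (e t)) + \<alpha> * frob n2 n3 n D"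
    using frob_diff_le[of n2 n3 n "tprod n n2 U (e t)" "\<lambda>i j k. \<alpha> * D i j k"]
      frob_cmult[of n2 n3 n \<alpha> D] \<open>\<alpha> > 0\<close> by simp
  also have "\<dots> \<le> \<kappa> * frob n2 n3 n (e t) + \<alpha> * (\<mu> * (\<Sum>s\<in>{1..n-1}. frob n2 n3 n (e (t - int s))))"
  proof (intro add_mono mult_left_mono)
    show "frob n2 n3 n (tprod n n2 U (e t)) \<le> \<kappa> * frob n2 n3 n (e t)"
      using frob_tprod_le kappa[OF \<open>i0 < n\<close>] unfolding U_def
      by (rule order_trans[OF _ mult_right_mono[OF _ frob_nonneg]])
    show "frob n2 n3 n D \<le> \<mu> * (\<Sum>s\<in>{1..n-1}. frob n2 n3 n (e (t - int s)))"
      unfolding D_def sum_distrib_left using delayed by (rule order_trans[OF frob_sum_le sum_mono])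
  qed (use \<open>\<alpha> > 0\<close> in simp)
  finally show ?thesis unfolding e_def by (simp add: mult.assoc)
qed

section \<open>Comparison with the majorant\<close>

lemma delayed_recurrence_comparison:
  fixes E F :: "int \<Rightarrow> real" and I :: "nat set"
  assumes "\<kappa> \<ge> 0" and "I \<noteq> {} \<Longrightarrow> c \<ge> 0"
    and E_rec: "\<And>t. t \<ge> 0 \<Longrightarrow> E (t + 1) \<le> \<kappa> * E t + c * (\<Sum>s\<in>I. E (t - int s))"
    and F_rec: "\<And>t. t \<ge> 0 \<Longrightarrow> F (t + 1) = \<kappa> * F t + c * (\<Sum>s\<in>I. F (t - int s))"
    and init: "\<And>t. t \<le> 0 \<Longrightarrow> E t \<le> F t"
  shows "E t \<le> F t"
proof -
  have "\<forall>t \<le> int m. E t \<le> F t" for m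
  proof (induction m)
    case 0
    then show ?case using init by simp
  next
    case (Suc m)
    have "(\<Sum>s\<in>I. E (int m - int s)) \<le> (\<Sum>s\<in>I. F (int m - int s))"
      using Suc.IH by (intro sum_mono) simp
    then have "c * (\<Sum>s\<in>I. E (int m - int s)) \<le> c * (\<Sum>s\<in>I. F (int m - int s))"
      using assms(2) by (cases "I = {}") (simp_all add: mult_left_mono)
    moreover have "\<kappa> * E (int m) \<le> \<kappa> * F (int m)"
      using Suc.IH \<open>\<kappa> \<ge> 0\<close> by (simp add: mult_left_mono)
    ultimately have "E (int m + 1) \<le> F (int m + 1)"
      using E_rec[of "int m"] F_rec[of "int m"] by simp
    show ?case
    proof (intro allI impI)
      fix t assume "t \<le> int (Suc m)"
      then consider "t \<le> int m" | "t = int m + 1" by linarith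
      then show "E t \<le> F t" using Suc.IH \<open>E (int m + 1) \<le> F (int m + 1)\<close> by cases auto
    qed
  qed
  moreover have "t \<le> int (nat t)" by simp
  ultimately show ?thesis by blast
qed

lemma closed_form_recurrence:
  fixes \<epsilon> :: "int \<Rightarrow> real" and I :: "nat set"
  assumes eps_init: "\<epsilon> 0 = 1"
    and eps_step: "\<And>t. t \<ge> 1 \<Longrightarrow>
        \<epsilon> t = \<kappa> ^ nat t + c * (\<Sum>j<nat t. \<kappa> ^ j * (\<Sum>s\<in>I. \<epsilon> (t - 1 - int j - int s)))"
    and "t \<ge> 0"
  shows "\<epsilon> (t + 1) = \<kappa> * \<epsilon> t + c * (\<Sum>s\<in>I. \<epsilon> (t - int s))"
proof -
  define S where "S u = (\<Sum>s\<in>I. \<epsilon> (u - int s))" for u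
  have closed: "\<epsilon> u = \<kappa> ^ nat u + c * (\<Sum>j<nat u. \<kappa> ^ j * S (u - 1 - int j))" if "u \<ge> 0" for u
  proof (cases "u = 0")
    case False
    then show ?thesis using that eps_step[of u] by (simp add: S_def algebra_simps)
  qed (simp add: eps_init)
  have "\<epsilon> (t + 1) = \<kappa> ^ Suc (nat t) + c * (\<Sum>j<Suc (nat t). \<kappa> ^ j * S (t - int j))"
    using closed[of "t + 1"] \<open>t \<ge> 0\<close> by (simp add: nat_add_distrib)
  also have "\<dots> = \<kappa> * (\<kappa> ^ nat t + c * (\<Sum>j<nat t. \<kappa> ^ j * S (t - 1 - int j))) + c * S t"
    unfolding sum.lessThan_Suc_shift by (simp add: algebra_simps sum_distrib_left)
  also have "\<dots> = \<kappa> * \<epsilon> t + c * S t"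
    using closed[OF \<open>t \<ge> 0\<close>] by simp
  finally show ?thesis unfolding S_def .
qed

lemma Max_offdiag_ge:
  fixes g :: "nat \<Rightarrow> nat \<Rightarrow> 'a::linorder"
  assumes "i < n" "j < n" "i \<noteq> j"
  shows "g i j \<le> Max {g i j | i j. i < n \<and> j < n \<and> i \<noteq> j}"
proof (rule Max_ge)
  show "finite {g i j | i j. i < n \<and> j < n \<and> i \<noteq> j}"
    by (rule finite_subset[where B = "(\<lambda>(i, j). g i j) ` ({..<n} \<times> {..<n})"]) auto
qed (use assms in auto)

theorem lemma2:
  fixes n1 n2 n3 n :: nat
    and A B Xstar :: tensor
    and \<alpha> \<kappa> \<mu> :: real
    and X :: "int \<Rightarrow> tensor"
    and \<epsilon> :: "int \<Rightarrow> real"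
  assumes n_pos: "n \<ge> 1"
    and alpha_pos: "\<alpha> > 0"
    and sol: "\<forall>i<n1. \<forall>j<n3. \<forall>k<n. tprod n n2 A Xstar i j k = B i j k"
    and uniq: "\<And>Y. (\<forall>i<n1. \<forall>j<n3. \<forall>k<n. tprod n n2 A Y i j k = B i j k) \<Longrightarrow>
                 (\<forall>i<n2. \<forall>j<n3. \<forall>k<n. Y i j k = Xstar i j k)"
    and kappa_def: "\<kappa> = Max {top_norm n2 n2 n
              (\<lambda>a b c. tident a b c - \<alpha> * tprod n n1 (ttrans n (tslice A i)) (tslice A i) a b c)
              | i. i < n}"
    and mu_def: "\<mu> = Max {top_norm n2 n2 n (tprod n n1 (ttrans n (tslice A i)) (tslice A j))
              | i j. i < n \<and> j < n \<and> i \<noteq> j}"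
    and X_init: "\<And>t. t \<le> 0 \<Longrightarrow> X t = (\<lambda>_ _ _. 0)"
    and X_step: "\<And>t. t \<ge> 0 \<Longrightarrow>
        X (t + 1) = (\<lambda>i j k. X t i j k + \<alpha> * tprod n n1 (ttrans n (tslice A (nat (t mod int n))))
            (\<lambda>a b c. B a b c - (\<Sum>s<n. tprod n n2 (tslice A (nat ((t - int s) mod int n)))
                                          (X (t - int s)) a b c)) i j k)"
    and eps_init: "\<And>t. t \<le> 0 \<Longrightarrow> \<epsilon> t = 1"
    and eps_step: "\<And>t. t \<ge> 1 \<Longrightarrow>
        \<epsilon> t = \<kappa> ^ nat t + \<alpha> * \<mu> * (\<Sum>j<nat t. \<kappa> ^ j *
                  (\<Sum>i\<in>{1..n-1}. \<epsilon> (t - 1 - int j - int i)))"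
  shows "\<forall>t\<ge>1. frob n2 n3 n (\<lambda>i j k. X t i j k - Xstar i j k)
               \<le> \<epsilon> t * frob n2 n3 n (\<lambda>i j k. X 0 i j k - Xstar i j k)"
proof -
  have "n > 0" using n_pos by simp
  have kappa: "top_norm n2 n2 n (\<lambda>a b c. tident a b c - \<alpha> * slice_gram n n1 A i i a b c) \<le> \<kappa>"
    if "i < n" for i
    unfolding kappa_def by (rule Max_ge) (use that in auto)
  have mu: "top_norm n2 n2 n (slice_gram n n1 A i j) \<le> \<mu>" if "i < n" "j < n" "i \<noteq> j" for i j
    unfolding mu_def using that by (rule Max_offdiag_ge)
  have kappa_nonneg: "\<kappa> \<ge> 0" using kappa[OF \<open>n > 0\<close>] top_norm_nonneg order_trans by blast
  text \<open>For \<open>n = 1\<close> the maximum defining \<open>\<mu>\<close> is over the empty set, but then there are no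
    delayed terms.\<close>
  have delay_coeff_nonneg: "\<alpha> * \<mu> \<ge> 0" if "{1..n-1} \<noteq> {}"
  proof -
    have "0 \<le> top_norm n2 n2 n (slice_gram n n1 A 0 1)" by (rule top_norm_nonneg)
    also have "\<dots> \<le> \<mu>" using that by (intro mu) auto
    finally show ?thesis using alpha_pos by simp
  qed
  define E where "E t = frob n2 n3 n (\<lambda>i j k. X t i j k - Xstar i j k)" for t
  have "E t \<le> \<epsilon> t * E 0" for t
  proof (rule delayed_recurrence_comparison[where E = E and F = "\<lambda>t. \<epsilon> t * E 0"
        and \<kappa> = \<kappa> and c = "\<alpha> * \<mu>" and I = "{1..n-1}"])
    show "E (t + 1) \<le> \<kappa> * E t + \<alpha> * \<mu> * (\<Sum>s\<in>{1..n-1}. E (t - int s))" if "t \<ge> 0" for t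
      unfolding E_def using \<open>n > 0\<close> alpha_pos sol kappa mu X_step[OF that] by (rule error_norm_recursion)
    show "\<epsilon> (t + 1) * E 0 = \<kappa> * (\<epsilon> t * E 0) + \<alpha> * \<mu> * (\<Sum>s\<in>{1..n-1}. \<epsilon> (t - int s) * E 0)"
      if "t \<ge> 0" for t
      using closed_form_recurrence[OF eps_init[of 0] eps_step that]
      by (simp add: algebra_simps sum_distrib_left)
    show "E t \<le> \<epsilon> t * E 0" if "t \<le> 0" for t
      using that by (simp add: E_def X_init eps_init)
  qed (use kappa_nonneg delay_coeff_nonneg in auto)
  then show ?thesis unfolding E_def by blast
qed

end
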